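(* Let $G$ be a finite group with identity $e$, $R[G]$ its real group algebra, $S=\{x\in R[G]:\sum_gx_g=1,\ x_g\ge0\ \forall g\}$, and $x\in S$. Then (1) $n_{xc_x}\le m_x$; (2) if $n_{xc_x}=n_x$ then $n_x=m_x=m_{xc_x}$.
   Context: $\mathrm{Supp}(y)=\{g:y_g\ne0\}$, $\mathbb N=\{1,2,\dots\}$. For $y\in S$: $n_y=\min\{k\in\mathbb N:(y^k)_e\ne0\}$; $G_y$ is the subgroup generated by $\mathrm{Supp}(y^{n_y})$; $c_y=\frac1{|G_y|}\sum_{g\in G_y}g$; $m_y=\min\{k\in\mathbb N:\mathrm{Supp}(y^k)\subset G_y\}$. Note $xc_x\in S$. *)

theory Defs
  imports "HOL-Algebra.Algebra"
begin

text \<open>Elements of the real group algebra R[G] of a finite group G are modelled as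
functions from the carrier to the reals, vanishing outside the carrier.\<close>

definition ga_mult :: "('a, 'b) monoid_scheme \<Rightarrow> ('a \<Rightarrow> real) \<Rightarrow> ('a \<Rightarrow> real) \<Rightarrow> ('a \<Rightarrow> real)" where
  "ga_mult G x y = (\<lambda>g. if g \<in> carrier G
      then (\<Sum>h\<in>carrier G. x h * y (inv\<^bsub>G\<^esub> h \<otimes>\<^bsub>G\<^esub> g)) else 0)"

definition ga_one :: "('a, 'b) monoid_scheme \<Rightarrow> ('a \<Rightarrow> real)" where
  "ga_one G = (\<lambda>g. if g = \<one>\<^bsub>G\<^esub> then 1 else 0)"

primrec ga_pow :: "('a, 'b) monoid_scheme \<Rightarrow> ('a \<Rightarrow> real) \<Rightarrow> nat \<Rightarrow> ('a \<Rightarrow> real)" where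
  "ga_pow G x 0 = ga_one G"
| "ga_pow G x (Suc k) = ga_mult G (ga_pow G x k) x"

definition Supp :: "('a, 'b) monoid_scheme \<Rightarrow> ('a \<Rightarrow> real) \<Rightarrow> 'a set" where
  "Supp G y = {g \<in> carrier G. y g \<noteq> 0}"

definition simplexS :: "('a, 'b) monoid_scheme \<Rightarrow> ('a \<Rightarrow> real) set" where
  "simplexS G = {x. (\<forall>g. g \<notin> carrier G \<longrightarrow> x g = 0) \<and> (\<forall>g \<in> carrier G. x g \<ge> 0)
                    \<and> (\<Sum>g\<in>carrier G. x g) = 1}"

definition n_of :: "('a, 'b) monoid_scheme \<Rightarrow> ('a \<Rightarrow> real) \<Rightarrow> nat" where
  "n_of G y = (LEAST k. k \<ge> 1 \<and> ga_pow G y k \<one>\<^bsub>G\<^esub> \<noteq> 0)"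

definition G_of :: "('a, 'b) monoid_scheme \<Rightarrow> ('a \<Rightarrow> real) \<Rightarrow> 'a set" where
  "G_of G y = generate G (Supp G (ga_pow G y (n_of G y)))"

definition c_of :: "('a, 'b) monoid_scheme \<Rightarrow> ('a \<Rightarrow> real) \<Rightarrow> ('a \<Rightarrow> real)" where
  "c_of G y = (\<lambda>g. if g \<in> G_of G y then 1 / real (card (G_of G y)) else 0)"

definition m_of :: "('a, 'b) monoid_scheme \<Rightarrow> ('a \<Rightarrow> real) \<Rightarrow> nat" where
  "m_of G y = (LEAST k. k \<ge> 1 \<and> Supp G (ga_pow G y k) \<subseteq> G_of G y)"

end

theory Submission
  imports Defs
begin

text \<open>For nonnegative x and y there is no cancellation in the convolution, so
Supp(xy) = Supp(x) Supp(y). Hence n_x, G_x and m_x depend only on the support A of x, and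
Supp(x c_x) = A H with H = G_x. In a finite group the subgroup H generated by A^n is the union
of the powers A^(jn), so A commutes with H and (A H)^k = A^k H for k \<ge> 1. As A^m \<subseteq> H,
(A H)^m = H contains e, which gives n_(x c_x) \<le> m_x \<le> n_x. If n_(x c_x) = n_x, then n = m,
(A H)^n = H generates H again, and A^k H \<subseteq> H iff A^k \<subseteq> H gives m_(x c_x) = m_x.\<close>


primrec set_pow :: "('a, 'b) monoid_scheme \<Rightarrow> 'a set \<Rightarrow> nat \<Rightarrow> 'a set" where
  "set_pow G A 0 = {\<one>\<^bsub>G\<^esub>}"
| "set_pow G A (Suc k) = set_pow G A k <#>\<^bsub>G\<^esub> A"

lemma set_mult_UN_right: "A <#>\<^bsub>G\<^esub> (\<Union>j. P j) = (\<Union>j. A <#>\<^bsub>G\<^esub> P j)"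
  unfolding set_mult_def by blast

lemma set_mult_UN_left: "(\<Union>j. P j) <#>\<^bsub>G\<^esub> A = (\<Union>j. P j <#>\<^bsub>G\<^esub> A)"
  unfolding set_mult_def by blast

context group
begin

lemma set_mult_one_left [simp]: "A \<subseteq> carrier G \<Longrightarrow> {\<one>} <#> A = A"
  unfolding set_mult_def by force

lemma set_mult_one_right [simp]: "A \<subseteq> carrier G \<Longrightarrow> A <#> {\<one>} = A"
  unfolding set_mult_def by force

lemma set_pow_closed: "A \<subseteq> carrier G \<Longrightarrow> set_pow G A k \<subseteq> carrier G"
  by (induction k) (simp_all add: set_mult_closed)

lemma set_pow_one [simp]: "A \<subseteq> carrier G \<Longrightarrow> set_pow G A 1 = A"
  by simp

lemma set_pow_add:
  assumes "A \<subseteq> carrier G"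
  shows "set_pow G A (i + j) = set_pow G A i <#> set_pow G A j"
proof (induction j)
  case 0
  show ?case using set_pow_closed[OF assms] by simp
next
  case (Suc j)
  then show ?case by (simp add: set_mult_assoc set_pow_closed assms)
qed

lemma set_pow_mult:
  assumes "A \<subseteq> carrier G"
  shows "set_pow G (set_pow G A n) j = set_pow G A (j * n)"
  by (induction j) (simp_all add: set_pow_add[OF assms, symmetric] add.commute)

lemma set_mult_set_pow_commute:
  assumes "A \<subseteq> carrier G"
  shows "A <#> set_pow G A k = set_pow G A k <#> A"
  using set_pow_add[OF assms, of 1 k] set_pow_add[OF assms, of k 1] assms by simp

lemma nat_pow_in_set_pow: "a \<in> A \<Longrightarrow> a [^] k \<in> set_pow G A k"
  by (induction k) (auto simp: set_mult_def)

lemma finite_inv_eq_nat_pow: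
  assumes "finite (carrier G)" and "a \<in> carrier G"
  obtains k :: nat where "inv a = a [^] k"
proof -
  have "inv a \<in> generate G {a}"
    using generate.incl[of a "{a}" G] assms(2) generate_is_subgroup subgroup.m_inv_closed
    by (metis empty_subsetI insert_subset singletonI)
  then show ?thesis using that generate_pow_on_finite_carrier[OF assms] by blast
qed

lemma finite_generate_eq_UN_set_pow:
  assumes fin: "finite (carrier G)" and S: "S \<subseteq> carrier G"
  shows "generate G S = (\<Union>k. set_pow G S k)"
proof
  let ?T = "\<Union>k. set_pow G S k"
  have mult: "a \<otimes> b \<in> ?T" if ab: "a \<in> ?T" "b \<in> ?T" for a b
  proof -
    from ab obtain i j where "a \<in> set_pow G S i" "b \<in> set_pow G S j" by (elim UN_E)
    then have "a \<otimes> b \<in> set_pow G S i <#> set_pow G S j" unfolding set_mult_def by blast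
    then have "a \<otimes> b \<in> set_pow G S (i + j)" unfolding set_pow_add[OF S] .
    then show ?thesis by (rule UN_I[OF UNIV_I])
  qed
  have one: "\<one> \<in> ?T"
    by (rule UN_I[of 0]) simp_all
  have pow: "a [^] (k::nat) \<in> ?T" if "a \<in> ?T" for a k
  proof (induction k)
    case 0
    show ?case using one by simp
  next
    case (Suc k)
    show ?case using mult[OF Suc that] by simp
  qed
  have "subgroup ?T G"
  proof (rule subgroupI)
    show "?T \<subseteq> carrier G" using set_pow_closed[OF S] by blast
    show "?T \<noteq> {}" using one by blast
    show "inv a \<in> ?T" if a: "a \<in> ?T" for a
    proof -
      have "a \<in> carrier G" using a set_pow_closed[OF S] by blast
      then obtain k :: nat where "inv a = a [^] k" using finite_inv_eq_nat_pow[OF fin] by blast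
      then show ?thesis using pow[OF a] by simp
    qed
  qed (rule mult)
  then show "generate G S \<subseteq> ?T"
    by (rule generate_subgroup_incl[rotated]) (use set_pow_one[OF S] in blast)
next
  show "(\<Union>k. set_pow G S k) \<subseteq> generate G S"
  proof (rule UN_least)
    show "set_pow G S k \<subseteq> generate G S" for k
      by (induction k) (auto simp: set_mult_def generate.one generate.incl generate.eng)
  qed
qed

lemma set_mult_generate_set_pow_commute:
  assumes fin: "finite (carrier G)" and A: "A \<subseteq> carrier G"
  shows "A <#> generate G (set_pow G A n) = generate G (set_pow G A n) <#> A"
  using set_mult_set_pow_commute[OF A]
  by (simp add: finite_generate_eq_UN_set_pow[OF fin set_pow_closed[OF A]] set_pow_mult[OF A]
      set_mult_UN_right set_mult_UN_left)

lemma set_mult_subgroup_subset_iff: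
  assumes "subgroup H G" and "B \<subseteq> carrier G"
  shows "B <#> H \<subseteq> H \<longleftrightarrow> B \<subseteq> H"
proof
  assume "B <#> H \<subseteq> H"
  moreover have "B \<subseteq> B <#> H"
    using assms subgroup.one_closed[OF assms(1)] unfolding set_mult_def by force
  ultimately show "B \<subseteq> H" by blast
next
  assume "B \<subseteq> H"
  then show "B <#> H \<subseteq> H"
    using subgroup.m_closed[OF assms(1)] unfolding set_mult_def by blast
qed

lemma set_mult_subgroup_absorb:
  assumes H: "subgroup H G" and "B \<subseteq> H" and "B \<noteq> {}"
  shows "B <#> H = H"
proof
  have "B \<subseteq> carrier G" using assms(2) subgroup.subset[OF H] by blast
  then show "B <#> H \<subseteq> H" using set_mult_subgroup_subset_iff[OF H] assms(2) by simp
  obtain b where b: "b \<in> B" using assms(3) by blast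
  show "H \<subseteq> B <#> H"
  proof
    fix h assume h: "h \<in> H"
    have "b \<in> H" using b assms(2) by blast
    then have "inv b \<otimes> h \<in> H" using h H by (simp add: subgroup.m_closed subgroup.m_inv_closed)
    moreover have "h = b \<otimes> (inv b \<otimes> h)"
      using \<open>b \<in> H\<close> h subgroup.mem_carrier[OF H] by (simp add: m_assoc[symmetric])
    ultimately show "h \<in> B <#> H" using b unfolding set_mult_def by blast
  qed
qed

lemma set_pow_nonempty: "A \<noteq> {} \<Longrightarrow> set_pow G A k \<noteq> {}"
  using nat_pow_in_set_pow by blast

lemma set_pow_set_mult_subgroup:
  assumes H: "subgroup H G" and A: "A \<subseteq> carrier G" and comm: "A <#> H = H <#> A"
    and k: "k \<ge> 1"
  shows "set_pow G (A <#> H) k = set_pow G A k <#> H"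
proof -
  have Hc: "H \<subseteq> carrier G" using H subgroup.subset by blast
  note closed = set_pow_closed[OF A] A Hc
  show ?thesis
    using k
  proof (induction k rule: dec_induct)
    case base
    show ?case using closed by (simp add: set_mult_closed)
  next
    case (step k)
    have "set_pow G (A <#> H) (Suc k) = (set_pow G A k <#> H) <#> (A <#> H)"
      using step.IH by simp
    also have "\<dots> = set_pow G A k <#> ((H <#> H) <#> A)"
      using closed by (simp add: comm set_mult_assoc set_mult_closed)
    also have "\<dots> = set_pow G A k <#> (A <#> H)"
      using subgroup_mult_id[OF H] comm by simp
    also have "\<dots> = set_pow G A (Suc k) <#> H"
      using closed by (simp add: set_mult_assoc)
    finally show ?case .
  qed
qed

end

definition n_set :: "('a, 'b) monoid_scheme \<Rightarrow> 'a set \<Rightarrow> nat" where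
  "n_set G A = (LEAST k. k \<ge> 1 \<and> \<one>\<^bsub>G\<^esub> \<in> set_pow G A k)"

definition G_set :: "('a, 'b) monoid_scheme \<Rightarrow> 'a set \<Rightarrow> 'a set" where
  "G_set G A = generate G (set_pow G A (n_set G A))"

definition m_set :: "('a, 'b) monoid_scheme \<Rightarrow> 'a set \<Rightarrow> nat" where
  "m_set G A = (LEAST k. k \<ge> 1 \<and> set_pow G A k \<subseteq> G_set G A)"

context group
begin

context
  fixes A :: "'a set"
  assumes fin: "finite (carrier G)" and A: "A \<subseteq> carrier G" and A_nonempty: "A \<noteq> {}"
begin

lemma n_set_spec: "n_set G A \<ge> 1 \<and> \<one> \<in> set_pow G A (n_set G A)"
  unfolding n_set_def
proof (rule LeastI)
  obtain a where a: "a \<in> A" using A_nonempty by blast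
  have "a [^] order G = \<one>" using a A pow_order_eq_1 by blast
  then show "order G \<ge> 1 \<and> \<one> \<in> set_pow G A (order G)"
    using nat_pow_in_set_pow[OF a, of "order G"] fin order_gt_0_iff_finite by auto
qed

lemma subgroup_G_set: "subgroup (G_set G A) G"
  unfolding G_set_def using generate_is_subgroup set_pow_closed[OF A] by blast

lemma set_mult_G_set_commute: "A <#> G_set G A = G_set G A <#> A"
  unfolding G_set_def by (rule set_mult_generate_set_pow_commute[OF fin A])

lemma set_pow_set_mult_G_set:
  "k \<ge> 1 \<Longrightarrow> set_pow G (A <#> G_set G A) k = set_pow G A k <#> G_set G A"
  using set_pow_set_mult_subgroup[OF subgroup_G_set A set_mult_G_set_commute] .

lemma set_pow_n_set_subset_G_set: "set_pow G A (n_set G A) \<subseteq> G_set G A"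
  unfolding G_set_def by (auto intro: generate.incl)

lemma m_set_spec: "m_set G A \<ge> 1 \<and> set_pow G A (m_set G A) \<subseteq> G_set G A"
proof -
  have "n_set G A \<ge> 1 \<and> set_pow G A (n_set G A) \<subseteq> G_set G A"
    using n_set_spec set_pow_n_set_subset_G_set by blast
  then show ?thesis unfolding m_set_def by (rule LeastI)
qed

lemma m_set_le_n_set: "m_set G A \<le> n_set G A"
  unfolding m_set_def using n_set_spec set_pow_n_set_subset_G_set by (blast intro: Least_le)

lemma n_set_set_mult_G_set_le_m_set: "n_set G (A <#> G_set G A) \<le> m_set G A"
proof -
  have "set_pow G (A <#> G_set G A) (m_set G A) = G_set G A"
    using m_set_spec set_pow_set_mult_G_set set_mult_subgroup_absorb[OF subgroup_G_set]
      set_pow_nonempty[OF A_nonempty] by simp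
  then have "\<one> \<in> set_pow G (A <#> G_set G A) (m_set G A)"
    using subgroup.one_closed[OF subgroup_G_set] by simp
  then show ?thesis unfolding n_set_def using m_set_spec by (simp add: Least_le)
qed

lemma m_set_set_mult_G_set_eq:
  assumes eq: "n_set G (A <#> G_set G A) = n_set G A"
  shows "n_set G A = m_set G A \<and> m_set G A = m_set G (A <#> G_set G A)"
proof
  show "n_set G A = m_set G A"
    using eq m_set_le_n_set n_set_set_mult_G_set_le_m_set by simp
  let ?H = "G_set G A"
  have "set_pow G (A <#> ?H) (n_set G A) = ?H"
    using n_set_spec set_pow_set_mult_G_set set_mult_subgroup_absorb[OF subgroup_G_set]
      set_pow_n_set_subset_G_set set_pow_nonempty[OF A_nonempty] by simp
  moreover have "generate G ?H = ?H"
    using generateI[OF subgroup_G_set subset_refl] by simp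
  ultimately have "G_set G (A <#> ?H) = ?H"
    by (simp only: G_set_def[of G "A <#> ?H"] eq)
  then have "set_pow G (A <#> ?H) k \<subseteq> G_set G (A <#> ?H) \<longleftrightarrow> set_pow G A k \<subseteq> ?H"
    if "k \<ge> 1" for k
    using that set_pow_set_mult_G_set set_mult_subgroup_subset_iff[OF subgroup_G_set]
      set_pow_closed[OF A] by simp
  then have "(k \<ge> 1 \<and> set_pow G (A <#> ?H) k \<subseteq> G_set G (A <#> ?H))
      \<longleftrightarrow> (k \<ge> 1 \<and> set_pow G A k \<subseteq> ?H)" for k
    by blast
  then show "m_set G A = m_set G (A <#> ?H)"
    unfolding m_set_def by simp
qed

end

end

definition ga_nonneg :: "('a, 'b) monoid_scheme \<Rightarrow> ('a \<Rightarrow> real) \<Rightarrow> bool" where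
  "ga_nonneg G x \<longleftrightarrow> (\<forall>g \<in> carrier G. 0 \<le> x g)"

lemma Supp_subset_carrier: "Supp G x \<subseteq> carrier G"
  unfolding Supp_def by blast

context group
begin

lemma ga_nonneg_mult:
  "ga_nonneg G x \<Longrightarrow> ga_nonneg G y \<Longrightarrow> ga_nonneg G (ga_mult G x y)"
  unfolding ga_nonneg_def ga_mult_def by (auto intro!: sum_nonneg)

lemma Supp_ga_mult:
  assumes fin: "finite (carrier G)" and x: "ga_nonneg G x" and y: "ga_nonneg G y"
  shows "Supp G (ga_mult G x y) = Supp G x <#> Supp G y"
proof (rule Set.set_eqI)
  fix g
  show "g \<in> Supp G (ga_mult G x y) \<longleftrightarrow> g \<in> Supp G x <#> Supp G y"
  proof (cases "g \<in> carrier G")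
    case False
    then show ?thesis using set_mult_closed[OF Supp_subset_carrier Supp_subset_carrier]
      unfolding Supp_def by blast
  next
    case g: True
    have nonneg: "0 \<le> x h * y (inv h \<otimes> g)" if "h \<in> carrier G" for h
      using x y g that unfolding ga_nonneg_def by simp
    have "g \<in> Supp G (ga_mult G x y) \<longleftrightarrow> (\<Sum>h \<in> carrier G. x h * y (inv h \<otimes> g)) \<noteq> 0"
      unfolding Supp_def ga_mult_def using g by simp
    also have "\<dots> \<longleftrightarrow> (\<exists>h \<in> carrier G. x h \<noteq> 0 \<and> y (inv h \<otimes> g) \<noteq> 0)"
      using sum_nonneg_eq_0_iff[OF fin nonneg] by simp
    also have "\<dots> \<longleftrightarrow> g \<in> Supp G x <#> Supp G y"
    proof
      assume "\<exists>h \<in> carrier G. x h \<noteq> 0 \<and> y (inv h \<otimes> g) \<noteq> 0"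
      then obtain h where h: "h \<in> carrier G" "x h \<noteq> 0" "y (inv h \<otimes> g) \<noteq> 0" by blast
      have "g = h \<otimes> (inv h \<otimes> g)" using h g by (simp add: m_assoc[symmetric])
      then show "g \<in> Supp G x <#> Supp G y"
        using h g unfolding Supp_def set_mult_def by blast
    next
      assume "g \<in> Supp G x <#> Supp G y"
      then obtain a b where "a \<in> Supp G x" "b \<in> Supp G y" "g = a \<otimes> b"
        unfolding set_mult_def by blast
      moreover have "inv a \<otimes> (a \<otimes> b) = b" if "a \<in> carrier G" "b \<in> carrier G"
        using that by (simp add: m_assoc[symmetric])
      ultimately show "\<exists>h \<in> carrier G. x h \<noteq> 0 \<and> y (inv h \<otimes> g) \<noteq> 0"
        unfolding Supp_def by auto
    qed
    finally show ?thesis .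
  qed
qed

lemma ga_nonneg_pow: "ga_nonneg G x \<Longrightarrow> ga_nonneg G (ga_pow G x k)"
  by (induction k) (simp_all add: ga_nonneg_mult, simp add: ga_nonneg_def ga_one_def)

lemma Supp_ga_pow:
  assumes fin: "finite (carrier G)" and x: "ga_nonneg G x"
  shows "Supp G (ga_pow G x k) = set_pow G (Supp G x) k"
proof (induction k)
  case 0
  show ?case by (auto simp: Supp_def ga_one_def)
next
  case (Suc k)
  then show ?case using Supp_ga_mult[OF fin ga_nonneg_pow[OF x] x] by simp
qed

context
  fixes x :: "'a \<Rightarrow> real"
  assumes fin: "finite (carrier G)" and x: "ga_nonneg G x"
begin

lemma n_of_eq_n_set: "n_of G x = n_set G (Supp G x)"
proof -
  have "ga_pow G x k \<one> \<noteq> 0 \<longleftrightarrow> \<one> \<in> set_pow G (Supp G x) k" for k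
    using Supp_ga_pow[OF fin x, of k] unfolding Supp_def by auto
  then show ?thesis unfolding n_of_def n_set_def by simp
qed

lemma G_of_eq_G_set: "G_of G x = G_set G (Supp G x)"
  unfolding G_of_def G_set_def by (simp add: n_of_eq_n_set Supp_ga_pow[OF fin x])

lemma m_of_eq_m_set: "m_of G x = m_set G (Supp G x)"
  unfolding m_of_def m_set_def by (simp add: G_of_eq_G_set Supp_ga_pow[OF fin x])

lemma Supp_c_of: "Supp G (c_of G x) = G_of G x"
proof -
  have "G_of G x \<subseteq> carrier G"
    unfolding G_of_def by (rule generate_incl[OF Supp_subset_carrier])
  moreover have "\<one> \<in> G_of G x"
    unfolding G_of_def by (rule generate.one)
  ultimately have "card (G_of G x) > 0"
    using fin by (metis card_gt_0_iff empty_iff finite_subset)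
  then show ?thesis using \<open>G_of G x \<subseteq> carrier G\<close> unfolding Supp_def c_of_def by auto
qed

lemma ga_nonneg_c_of: "ga_nonneg G (c_of G x)"
  unfolding ga_nonneg_def c_of_def by simp

end

end

lemma simplexS_ga_nonneg: "x \<in> simplexS G \<Longrightarrow> ga_nonneg G x"
  unfolding simplexS_def ga_nonneg_def by blast

lemma simplexS_Supp_nonempty:
  assumes "x \<in> simplexS G"
  shows "Supp G x \<noteq> {}"
proof
  assume "Supp G x = {}"
  then have "sum x (carrier G) = 0" unfolding Supp_def by simp
  then show False using assms unfolding simplexS_def by simp
qed

theorem proposition4:
  fixes G :: "('a, 'b) monoid_scheme" and x :: "'a \<Rightarrow> real"
  assumes "group G" and "finite (carrier G)" and "x \<in> simplexS G"
  shows "n_of G (ga_mult G x (c_of G x)) \<le> m_of G x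
     \<and> (n_of G (ga_mult G x (c_of G x)) = n_of G x \<longrightarrow>
          n_of G x = m_of G x \<and> m_of G x = m_of G (ga_mult G x (c_of G x)))"
proof -
  interpret group G by fact
  note fin = assms(2)
  have x: "ga_nonneg G x" using simplexS_ga_nonneg[OF assms(3)] .
  define A where "A = Supp G x"
  define y where "y = ga_mult G x (c_of G x)"
  have y: "ga_nonneg G y"
    unfolding y_def using ga_nonneg_mult[OF x ga_nonneg_c_of[OF fin x]] .
  have Supp_y: "Supp G y = A <#>\<^bsub>G\<^esub> G_set G A"
    unfolding y_def A_def using Supp_ga_mult[OF fin x ga_nonneg_c_of[OF fin x]]
    by (simp add: Supp_c_of[OF fin x] G_of_eq_G_set[OF fin x])
  have A: "A \<subseteq> carrier G" "A \<noteq> {}"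
    unfolding A_def by (rule Supp_subset_carrier, rule simplexS_Supp_nonempty[OF assms(3)])
  show ?thesis
    unfolding y_def[symmetric] n_of_eq_n_set[OF fin x] n_of_eq_n_set[OF fin y]
      m_of_eq_m_set[OF fin x] m_of_eq_m_set[OF fin y] Supp_y A_def[symmetric]
    using n_set_set_mult_G_set_le_m_set[OF fin A] m_set_set_mult_G_set_eq[OF fin A] by blast
qed

end
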